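(* If $X$ is a uniformly joinable uniform space, then for each $x\in X$ the uniform fundamental pro-group $\mathrm{pro}\text{-}\pi_1(X,x)=\{\pi_1(R(X,E),x)\}_E$ satisfies the strong Mittag-Leffler condition.
   Context: $R(X,E)$ is the Rips complex of $X$ (vertex set $X$, simplices the finite $F$ with $F\times F\subset E$, weak topology); $e(x,y)$ is the edge-path. The inverse system $\{\pi_1(R(X,E),x)\}_E$ is indexed by entourages ordered by reverse inclusion, with inclusion-induced bonding maps; its inverse limit is denoted $\check\pi_1(X,x)$. Paths $c,d$ in $R(X,E)$ with end-points in $X$ are $E$-homotopic if their initial points $x_c,x_d$ and terminal points $y_c,y_d$ satisfy $(x_c,x_d),(y_c,y_d)\in E$ and $c\simeq e(x_c,x_d)\ast d\ast e(y_d,y_c)$ rel. end-points in $R(X,E)$. A generalized path from $x$ to $y$ is a family $\{[c_E]\}_E$ of homotopy classes rel. end-points of paths from $x$ to $y$ in $R(X,E)$ with $c_F\simeq c_E$ in $R(X,E)$ for $F\subset E$; it is $F$-short if $(x,y)\in F$ and $c_F\simeq e(x,y)$ rel. end-points in $R(X,F)$. $X$ is uniformly joinable if for each entourage $E$ there is an entourage $F$ such that any $(x,y)\in F$ are joined by an $E$-short generalized path. An inverse system of groups $\{G_a\}_{a\in A}$ with inverse limit $G$ satisfies the strong Mittag-Leffler condition if for every $a$ there is $b>a$ such that the image of $G\to G_a$ contains the image of $G_b\to G_a$. *)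

theory Defs
  imports "HOL-Analysis.Analysis"
begin

definition entourage :: "('a::uniform_space \<times> 'a) set \<Rightarrow> bool" where
  "entourage E \<longleftrightarrow> eventually (\<lambda>p. p \<in> E) uniformity"

text \<open>Points of the geometric realization are modelled as finitely supported
  functions X -> real (barycentric coordinates).\<close>

definition supp :: "('a \<Rightarrow> real) \<Rightarrow> 'a set" where
  "supp f = {z. f z \<noteq> 0}"

definition rips_simplex :: "('a \<times> 'a) set \<Rightarrow> 'a set \<Rightarrow> bool" where
  "rips_simplex E F \<longleftrightarrow> finite F \<and> F \<noteq> {} \<and> F \<times> F \<subseteq> E"

definition closed_simplex :: "'a set \<Rightarrow> ('a \<Rightarrow> real) set" where
  "closed_simplex F = {f. (\<forall>z. 0 \<le> f z) \<and> supp f \<subseteq> F \<and> sum f F = 1}"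

definition rips_space :: "('a \<times> 'a) set \<Rightarrow> ('a \<Rightarrow> real) set" where
  "rips_space E = (\<Union>F\<in>{F. rips_simplex E F}. closed_simplex F)"

text \<open>Weak topology: U is open iff its trace on every closed simplex is open
  in the (Euclidean = product) topology of that simplex.\<close>
definition rips_open :: "('a \<times> 'a) set \<Rightarrow> ('a \<Rightarrow> real) set \<Rightarrow> bool" where
  "rips_open E U \<longleftrightarrow> U \<subseteq> rips_space E \<and>
     (\<forall>F. rips_simplex E F \<longrightarrow> openin (top_of_set (closed_simplex F)) (U \<inter> closed_simplex F))"

lemma rips_open_Int:
  assumes "rips_open E S" "rips_open E T"
  shows "rips_open E (S \<inter> T)"
  unfolding rips_open_def
proof
  show "S \<inter> T \<subseteq> rips_space E" using assms unfolding rips_open_def by blast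
  show "\<forall>F. rips_simplex E F \<longrightarrow> openin (top_of_set (closed_simplex F)) (S \<inter> T \<inter> closed_simplex F)"
  proof (intro allI impI)
    fix F assume F: "rips_simplex E F"
    have 1: "openin (top_of_set (closed_simplex F)) (S \<inter> closed_simplex F)"
      using assms(1) F unfolding rips_open_def by blast
    have 2: "openin (top_of_set (closed_simplex F)) (T \<inter> closed_simplex F)"
      using assms(2) F unfolding rips_open_def by blast
    have "openin (top_of_set (closed_simplex F)) ((S \<inter> closed_simplex F) \<inter> (T \<inter> closed_simplex F))"
      using 1 2 by (rule openin_Int)
    moreover have "(S \<inter> closed_simplex F) \<inter> (T \<inter> closed_simplex F) = S \<inter> T \<inter> closed_simplex F"
      by blast
    ultimately show "openin (top_of_set (closed_simplex F)) (S \<inter> T \<inter> closed_simplex F)"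
      by simp
  qed
qed

lemma rips_open_Union:
  assumes "\<And>S. S \<in> K \<Longrightarrow> rips_open E S"
  shows "rips_open E (\<Union>K)"
  unfolding rips_open_def
proof
  show "\<Union>K \<subseteq> rips_space E" using assms unfolding rips_open_def by blast
  show "\<forall>F. rips_simplex E F \<longrightarrow> openin (top_of_set (closed_simplex F)) (\<Union>K \<inter> closed_simplex F)"
  proof (intro allI impI)
    fix F assume F: "rips_simplex E F"
    have "openin (top_of_set (closed_simplex F)) (\<Union>((\<lambda>S. S \<inter> closed_simplex F) ` K))"
    proof (rule openin_Union)
      fix U assume "U \<in> (\<lambda>S. S \<inter> closed_simplex F) ` K"
      then obtain S where S: "S \<in> K" "U = S \<inter> closed_simplex F" by blast
      have "rips_open E S" using assms S(1) .
      then show "openin (top_of_set (closed_simplex F)) U"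
        using F S(2) unfolding rips_open_def by blast
    qed
    moreover have "\<Union>((\<lambda>S. S \<inter> closed_simplex F) ` K) = \<Union>K \<inter> closed_simplex F"
      by blast
    ultimately show "openin (top_of_set (closed_simplex F)) (\<Union>K \<inter> closed_simplex F)"
      by simp
  qed
qed

lemma istopology_rips_open: "istopology (rips_open E)"
  unfolding istopology_def using rips_open_Int rips_open_Union by blast

definition rips :: "('a \<times> 'a) set \<Rightarrow> ('a \<Rightarrow> real) topology" where
  "rips E = topology (rips_open E)"

definition vertex :: "'a \<Rightarrow> ('a \<Rightarrow> real)" where
  "vertex x = (\<lambda>z. if z = x then 1 else 0)"

definition edge_path :: "'a \<Rightarrow> 'a \<Rightarrow> real \<Rightarrow> ('a \<Rightarrow> real)" where
  "edge_path x y = (\<lambda>t. \<lambda>z. (1 - t) * vertex x z + t * vertex y z)"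

definition path_from_to :: "'b topology \<Rightarrow> 'b \<Rightarrow> 'b \<Rightarrow> (real \<Rightarrow> 'b) \<Rightarrow> bool" where
  "path_from_to T a b c \<longleftrightarrow> pathin T c \<and> c 0 = a \<and> c 1 = b"

definition homotopic_rel_ends :: "'b topology \<Rightarrow> (real \<Rightarrow> 'b) \<Rightarrow> (real \<Rightarrow> 'b) \<Rightarrow> bool" where
  "homotopic_rel_ends T p q \<longleftrightarrow>
     homotopic_with (\<lambda>h. h 0 = p 0 \<and> h 1 = p 1) (top_of_set {0..1}) T p q"

text \<open>A generalized path from x to y, given by representatives c E of the
  homotopy classes [c_E].\<close>
definition generalized_path :: "'a::uniform_space \<Rightarrow> 'a \<Rightarrow> (('a \<times> 'a) set \<Rightarrow> real \<Rightarrow> ('a \<Rightarrow> real)) \<Rightarrow> bool" where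
  "generalized_path x y c \<longleftrightarrow>
     (\<forall>E. entourage E \<longrightarrow> path_from_to (rips E) (vertex x) (vertex y) (c E)) \<and>
     (\<forall>E F. entourage E \<longrightarrow> entourage F \<longrightarrow> F \<subseteq> E \<longrightarrow> homotopic_rel_ends (rips E) (c F) (c E))"

definition short_gpath :: "('a \<times> 'a) set \<Rightarrow> 'a \<Rightarrow> 'a \<Rightarrow> (('a \<times> 'a) set \<Rightarrow> real \<Rightarrow> ('a \<Rightarrow> real)) \<Rightarrow> bool" where
  "short_gpath F x y c \<longleftrightarrow> (x, y) \<in> F \<and> homotopic_rel_ends (rips F) (c F) (edge_path x y)"

definition uniformly_joinable :: "'a::uniform_space itself \<Rightarrow> bool" where
  "uniformly_joinable (_::'a itself) \<longleftrightarrow>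
     (\<forall>E::('a \<times> 'a) set. entourage E \<longrightarrow>
        (\<exists>F. entourage F \<and>
          (\<forall>x y. (x, y) \<in> F \<longrightarrow> (\<exists>c. generalized_path x y c \<and> short_gpath E x y c))))"

text \<open>Elements of pi_1(R(X,E),x) are homotopy classes of loops; we work with
  representatives. An element of the inverse limit check-pi_1(X,x) is a thread:
  loops g E with g F homotopic to g E in R(X,E) whenever F is contained in E
  (i.e. [g F] maps to [g E] under the inclusion-induced bonding map).\<close>
definition loop_at :: "('a \<times> 'a) set \<Rightarrow> 'a \<Rightarrow> (real \<Rightarrow> ('a \<Rightarrow> real)) \<Rightarrow> bool" where
  "loop_at E x c \<longleftrightarrow> path_from_to (rips E) (vertex x) (vertex x) c"

definition pi1_thread :: "'a::uniform_space \<Rightarrow> (('a \<times> 'a) set \<Rightarrow> real \<Rightarrow> ('a \<Rightarrow> real)) \<Rightarrow> bool" where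
  "pi1_thread x g \<longleftrightarrow>
     (\<forall>E. entourage E \<longrightarrow> loop_at E x (g E)) \<and>
     (\<forall>E F. entourage E \<longrightarrow> entourage F \<longrightarrow> F \<subseteq> E \<longrightarrow> homotopic_rel_ends (rips E) (g F) (g E))"

text \<open>Strong Mittag-Leffler: for every E there is F (F contained in E, i.e. F >= E
  in the reverse-inclusion order) such that the image of pi_1(R(X,F),x) in
  pi_1(R(X,E),x) is contained in the image of the inverse limit.\<close>
definition strong_ML_pi1 :: "'a::uniform_space \<Rightarrow> bool" where
  "strong_ML_pi1 x \<longleftrightarrow>
     (\<forall>E. entourage E \<longrightarrow>
        (\<exists>F. entourage F \<and> F \<subseteq> E \<and>
           (\<forall>c. loop_at F x c \<longrightarrow>
              (\<exists>g. pi1_thread x g \<and> homotopic_rel_ends (rips E) (g E) c))))"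

end

theory Submission
  imports Defs
begin

(* Given an entourage E, uniform joinability yields J such that
   J-close points are joined by E-short generalized paths; take F = J \<inter> E.
   A loop c at x in R(X,F) is homotopic rel. end-points to an edge loop
   e(w0,w1) * ... * e(w(N-1),wN) whose consecutive vertices span F-simplices
   (simplicial approximation).  Replacing each edge by an E-short generalized path
   and concatenating levelwise gives a thread of the inverse system whose
   E-component is homotopic to the edge loop, hence to c. *)

section \<open>The weak topology of the Rips complex\<close>

lemma rips_open_space: "rips_open E (rips_space E)"
  unfolding rips_open_def
proof (intro conjI allI impI)
  fix F assume "rips_simplex E F"
  then have "rips_space E \<inter> closed_simplex F = closed_simplex F"
    unfolding rips_space_def by blast
  then show "openin (top_of_set (closed_simplex F)) (rips_space E \<inter> closed_simplex F)"
    by simp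
qed auto

lemma openin_rips: "openin (rips E) U \<longleftrightarrow> rips_open E U"
  unfolding rips_def using istopology_rips_open[of E] topology_inverse'[of "rips_open E"] by simp

lemma topspace_rips: "topspace (rips E) = rips_space E"
  unfolding topspace_def openin_rips using rips_open_space
  by (auto simp: rips_open_def)

lemma closedin_rips: "closedin (rips E) C \<longleftrightarrow> C \<subseteq> rips_space E \<and> rips_open E (rips_space E - C)"
  by (simp add: closedin_def topspace_rips openin_rips)

lemma closed_simplex_in_rips_space: "rips_simplex E G \<Longrightarrow> closed_simplex G \<subseteq> rips_space E"
  unfolding rips_space_def by blast

lemma rips_simplex_subset: "rips_simplex E G \<Longrightarrow> H \<subseteq> G \<Longrightarrow> H \<noteq> {} \<Longrightarrow> rips_simplex E H"
  unfolding rips_simplex_def by (auto intro: finite_subset)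

lemma closed_closed_simplex: "finite G \<Longrightarrow> closed (closed_simplex G)"
proof -
  assume G: "finite G"
  have "closed_simplex G = {f. \<forall>z. 0 \<le> f z \<and> (z \<in> G \<or> f z = 0)} \<inter> {f. sum f G = 1}"
    unfolding closed_simplex_def supp_def by auto
  moreover have "closed {f::'a\<Rightarrow>real. \<forall>z. 0 \<le> f z \<and> (z \<in> G \<or> f z = 0)}"
    by (intro closed_Collect_all closed_Collect_conj closed_Collect_le closed_Collect_disj closed_Collect_eq
        closed_Collect_const continuous_on_const continuous_on_product_coordinates)
  moreover have "closed {f::'a\<Rightarrow>real. sum f G = 1}"
    by (intro closed_Collect_eq continuous_on_sum continuous_on_const continuous_on_product_coordinates)
  ultimately show ?thesis by auto
qed

lemma closed_finite_fun: "finite (S :: ('a \<Rightarrow> real) set) \<Longrightarrow> closed S"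
proof (induction S rule: finite_induct)
  case (insert f S)
  have "closed {g::'a\<Rightarrow>real. \<forall>z. g z = f z}"
    by (intro closed_Collect_all closed_Collect_eq continuous_on_const continuous_on_product_coordinates)
  moreover have "{g::'a\<Rightarrow>real. \<forall>z. g z = f z} = {f}" by auto
  ultimately show ?case using insert by (metis closed_Un insert_is_Un)
qed auto

lemma rips_space_supp:
  assumes "f \<in> rips_space E"
  shows "rips_simplex E (supp f)" "f \<in> closed_simplex (supp f)"
proof -
  obtain G where G: "rips_simplex E G" "f \<in> closed_simplex G"
    using assms unfolding rips_space_def by blast
  have sub: "supp f \<subseteq> G" using G unfolding closed_simplex_def by auto
  have fin: "finite G" using G unfolding rips_simplex_def by auto
  have "sum f G = sum f (supp f)"
    by (rule sum.mono_neutral_right[OF fin sub]) (auto simp: supp_def)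
  then have s: "sum f (supp f) = 1" using G unfolding closed_simplex_def by auto
  then have "supp f \<noteq> {}" by auto
  then show "rips_simplex E (supp f)"
    using G sub fin unfolding rips_simplex_def by (auto intro: finite_subset)
  show "f \<in> closed_simplex (supp f)"
    using G s unfolding closed_simplex_def by auto
qed

lemma rips_space_positive_vertex:
  assumes "f \<in> rips_space E"
  obtains v where "f v > 0"
proof -
  have "sum f (supp f) = 1" "\<forall>z. 0 \<le> f z"
    using rips_space_supp(2)[OF assms] unfolding closed_simplex_def by auto
  then obtain v where "v \<in> supp f" by fastforce
  then show ?thesis using that \<open>\<forall>z. 0 \<le> f z\<close> unfolding supp_def by (simp add: order_less_le)
qed

lemma continuous_map_rips_euclidean: "continuous_map (rips E) euclidean (\<lambda>f. f)"
  unfolding continuous_map_def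
proof (intro conjI allI impI)
  fix U :: "('a \<Rightarrow> real) set" assume "openin euclidean U"
  then have U: "open U" by simp
  show "openin (rips E) {x \<in> topspace (rips E). x \<in> U}"
    unfolding openin_rips topspace_rips rips_open_def
  proof (intro conjI allI impI)
    fix F assume "rips_simplex E F"
    then have "{x \<in> rips_space E. x \<in> U} \<inter> closed_simplex F = closed_simplex F \<inter> U"
      unfolding rips_space_def by blast
    then show "openin (top_of_set (closed_simplex F)) ({x \<in> rips_space E. x \<in> U} \<inter> closed_simplex F)"
      using U by (simp add: openin_open_Int)
  qed auto
qed auto

text \<open>For entourages F \<subseteq> E, R(X,F) is a subcomplex of R(X,E) and the inclusion
  is continuous; this induces the bonding maps of the pro-group.\<close>
lemma continuous_map_rips_mono:
  assumes "F \<subseteq> E"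
  shows "continuous_map (rips F) (rips E) (\<lambda>f. f)"
proof -
  have simp: "rips_simplex F G \<Longrightarrow> rips_simplex E G" for G
    using assms unfolding rips_simplex_def by auto
  have sp: "rips_space F \<subseteq> rips_space E"
    unfolding rips_space_def using simp by blast
  show ?thesis
    unfolding continuous_map_def topspace_rips
  proof (intro conjI allI impI)
    show "(\<lambda>f. f) \<in> rips_space F \<rightarrow> rips_space E" using sp by auto
    fix U assume "openin (rips E) U"
    then have U: "rips_open E U" by (simp add: openin_rips)
    show "openin (rips F) {x \<in> rips_space F. x \<in> U}"
      unfolding openin_rips rips_open_def
    proof (intro conjI allI impI)
      fix G assume G: "rips_simplex F G"
      then have "{x \<in> rips_space F. x \<in> U} \<inter> closed_simplex G = U \<inter> closed_simplex G"
        unfolding rips_space_def by blast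
      then show "openin (top_of_set (closed_simplex G)) ({x \<in> rips_space F. x \<in> U} \<inter> closed_simplex G)"
        using U simp[OF G] unfolding rips_open_def by simp
    qed auto
  qed
qed

lemma closedin_rips_Int_simplex:
  assumes "closedin (rips E) C" "rips_simplex E G"
  shows "closed (C \<inter> closed_simplex G)"
proof -
  have o: "openin (top_of_set (closed_simplex G)) ((rips_space E - C) \<inter> closed_simplex G)"
    using assms unfolding closedin_rips rips_open_def by blast
  have "closed_simplex G - C \<inter> closed_simplex G = (rips_space E - C) \<inter> closed_simplex G"
    using closed_simplex_in_rips_space[OF assms(2)] by blast
  then have "closedin (top_of_set (closed_simplex G)) (C \<inter> closed_simplex G)"
    using o unfolding closedin_def by simp
  moreover have "closed (closed_simplex G)"
    using assms(2) closed_closed_simplex unfolding rips_simplex_def by blast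
  ultimately show ?thesis using closedin_closed_trans by blast
qed

lemma closedin_rips_finite_traces:
  assumes "S \<subseteq> rips_space E" "\<And>G. rips_simplex E G \<Longrightarrow> finite (S \<inter> closed_simplex G)"
  shows "closedin (rips E) S"
  unfolding closedin_rips rips_open_def
proof (intro conjI allI impI)
  fix G assume G: "rips_simplex E G"
  have "closed (S \<inter> closed_simplex G)" using assms(2)[OF G] by (rule closed_finite_fun)
  moreover have "(rips_space E - S) \<inter> closed_simplex G = closed_simplex G \<inter> - (S \<inter> closed_simplex G)"
    using closed_simplex_in_rips_space[OF G] by blast
  ultimately show "openin (top_of_set (closed_simplex G)) ((rips_space E - S) \<inter> closed_simplex G)"
    by (metis openin_open_Int open_Compl)
qed (use assms(1) in auto)

text \<open>A map which is continuous into the product topology and takes values in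
  the simplices over a fixed finite vertex set is continuous into R(X,E): its
  preimages of closed sets are finite unions of preimages of closed sets of simplices.\<close>
lemma continuous_map_into_rips:
  assumes h: "continuous_map Y euclidean h" and V: "finite V"
    and hv: "\<And>y. y \<in> topspace Y \<Longrightarrow> h y \<in> rips_space E \<and> supp (h y) \<subseteq> V"
  shows "continuous_map Y (rips E) h"
  unfolding continuous_map_closedin topspace_rips
proof (intro conjI allI impI)
  show "h \<in> topspace Y \<rightarrow> rips_space E" using hv by auto
  fix C assume C: "closedin (rips E) C"
  let ?GS = "{G. G \<subseteq> V \<and> rips_simplex E G}"
  have eq: "{y \<in> topspace Y. h y \<in> C} = (\<Union>G\<in>?GS. {y \<in> topspace Y. h y \<in> C \<inter> closed_simplex G})"
  proof (intro equalityI subsetI)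
    fix y assume y: "y \<in> {y \<in> topspace Y. h y \<in> C}"
    then have "h y \<in> rips_space E" "supp (h y) \<subseteq> V" using hv by auto
    then show "y \<in> (\<Union>G\<in>?GS. {y \<in> topspace Y. h y \<in> C \<inter> closed_simplex G})"
      using y rips_space_supp[of "h y" E] by blast
  qed auto
  have fin: "finite ?GS" using V by (rule finite_subset[rotated, OF finite_Pow_iff[THEN iffD2]]) auto
  have "closedin Y {y \<in> topspace Y. h y \<in> C \<inter> closed_simplex G}" if "G \<in> ?GS" for G
    using closedin_continuous_map_preimage[OF h, of "C \<inter> closed_simplex G"]
      closedin_rips_Int_simplex[OF C] that by auto
  then show "closedin Y {y \<in> topspace Y. h y \<in> C}"
    unfolding eq by (intro closedin_Union) (use fin in auto)
qed

lemma continuous_map_euclidean_fun_iff: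
  "continuous_map X euclidean (f :: 'x \<Rightarrow> 'a \<Rightarrow> real) \<longleftrightarrow> (\<forall>k. continuous_map X euclideanreal (\<lambda>x. f x k))"
  by (subst euclidean_product_topology[symmetric]) (rule continuous_map_componentwise_UNIV)

lemma compactin_discrete_finite:
  assumes K: "compactin X S" and cl: "\<And>S'. S' \<subseteq> S \<Longrightarrow> closedin X S'"
  shows "finite S"
proof -
  let ?U = "(\<lambda>q. topspace X - (S - {q})) ` S"
  have "\<forall>U\<in>?U. openin X U" using cl by (auto intro!: openin_diff)
  moreover have "S \<subseteq> \<Union>?U" using compactin_subset_topspace[OF K] by auto
  ultimately obtain \<F> where F: "finite \<F>" "\<F> \<subseteq> ?U" "S \<subseteq> \<Union>\<F>"
    using K unfolding compactin_def by meson
  then obtain S0 where S0: "S0 \<subseteq> S" "finite S0" "\<F> = (\<lambda>q. topspace X - (S - {q})) ` S0"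
    by (meson finite_subset_image)
  have "S \<subseteq> S0" using F(3) S0 by blast
  then show ?thesis using S0(2) finite_subset by blast
qed

text \<open>A compact subset of R(X,E) meets only finitely many vertices: choosing one
  point of the set above each vertex gives a discrete, hence finite, subset.\<close>
lemma compactin_rips_finite_vertices:
  assumes K: "compactin (rips E) K"
  shows "finite (\<Union>q\<in>K. supp q)"
proof -
  have Ksub: "K \<subseteq> rips_space E" using compactin_subset_topspace[OF K] by (simp add: topspace_rips)
  let ?U = "\<Union>q\<in>K. supp q"
  define p where "p v = (SOME q. q \<in> K \<and> v \<in> supp q)" for v
  have p: "p v \<in> K \<and> v \<in> supp (p v)" if "v \<in> ?U" for v
  proof -
    have "\<exists>q. q \<in> K \<and> v \<in> supp q" using that by auto
    then show ?thesis unfolding p_def by (rule someI_ex)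
  qed
  let ?S = "p ` ?U"
  have SK: "?S \<subseteq> K" using p by auto
  have clS: "closedin (rips E) S'" if S': "S' \<subseteq> ?S" for S'
  proof (rule closedin_rips_finite_traces)
    show "S' \<subseteq> rips_space E" using S' SK Ksub by auto
    fix G assume G: "rips_simplex E G"
    have "S' \<inter> closed_simplex G \<subseteq> p ` (?U \<inter> G)"
    proof
      fix q assume q: "q \<in> S' \<inter> closed_simplex G"
      then obtain v where v: "v \<in> ?U" "q = p v" using S' by blast
      then have "v \<in> G" using p q unfolding closed_simplex_def by auto
      then show "q \<in> p ` (?U \<inter> G)" using v by auto
    qed
    moreover have "finite G" using G unfolding rips_simplex_def by auto
    ultimately show "finite (S' \<inter> closed_simplex G)" by (meson finite_Int finite_imageI finite_subset)
  qed
  have "compactin (rips E) ?S" by (rule closed_compactin[OF K SK clS]) simp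
  then have finS: "finite ?S" by (rule compactin_discrete_finite) (use clS in auto)
  have "?U \<subseteq> (\<Union>q\<in>?S. supp q)" using p by blast
  moreover have "finite (supp q)" if "q \<in> ?S" for q
    using rips_space_supp(1)[of q E] that SK Ksub unfolding rips_simplex_def by auto
  ultimately show ?thesis using finS by (meson finite_UN_I finite_subset)
qed

lemma pathin_rips_finite_vertices:
  assumes "pathin (rips E) c"
  shows "finite (\<Union>t\<in>{0..1}. supp (c t))"
proof -
  have "compactin (rips E) (c ` {0..1})"
    using assms unfolding pathin_def
    by (intro image_compactin[of "subtopology euclideanreal {0..1}"]) (auto simp: compactin_subtopology)
  then show ?thesis using compactin_rips_finite_vertices by fastforce
qed

section \<open>Homotopy relative to end-points\<close>

lemma homotopic_rel_ends_ends: "homotopic_rel_ends T p q \<Longrightarrow> q 0 = p 0 \<and> q 1 = p 1"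
  unfolding homotopic_rel_ends_def by (drule homotopic_with_imp_property) auto

lemma homotopic_rel_ends_sym:
  assumes "homotopic_rel_ends T p q" shows "homotopic_rel_ends T q p"
proof -
  have e: "q 0 = p 0" "q 1 = p 1" using homotopic_rel_ends_ends[OF assms] by auto
  show ?thesis using assms unfolding homotopic_rel_ends_def
    by (subst homotopic_with_sym) (simp add: e)
qed

lemma homotopic_rel_ends_trans:
  assumes "homotopic_rel_ends T p q" "homotopic_rel_ends T q r"
  shows "homotopic_rel_ends T p r"
proof -
  have e: "q 0 = p 0" "q 1 = p 1" using homotopic_rel_ends_ends[OF assms(1)] by auto
  show ?thesis using assms unfolding homotopic_rel_ends_def e
    using homotopic_with_trans by blast
qed

lemma homotopic_rel_ends_rips_mono:
  assumes "F \<subseteq> E" "homotopic_rel_ends (rips F) p q"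
  shows "homotopic_rel_ends (rips E) p q"
proof -
  have "homotopic_with (\<lambda>h. h 0 = p 0 \<and> h 1 = p 1) (top_of_set {0..1}) (rips E) ((\<lambda>f. f) \<circ> p) ((\<lambda>f. f) \<circ> q)"
    using assms(2) unfolding homotopic_rel_ends_def
    by (rule homotopic_with_compose_continuous_map_left[OF _ continuous_map_rips_mono[OF assms(1)]])
      (simp add: o_def)
  then show ?thesis unfolding homotopic_rel_ends_def by (simp add: o_def)
qed

section \<open>Concatenation of finitely many paths\<close>

text \<open>cat N p runs through the paths p 0, ..., p (N-1), each on an interval of
  length 1/N.\<close>
definition cat :: "nat \<Rightarrow> (nat \<Rightarrow> real \<Rightarrow> 'b) \<Rightarrow> real \<Rightarrow> 'b" where
  "cat N p t = p (min (N-1) (nat \<lfloor>real N * t\<rfloor>)) (real N * t - real (min (N-1) (nat \<lfloor>real N * t\<rfloor>)))"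

text \<open>On the i-th closed subinterval, cat N p is the reparametrized i-th path
  (well defined at break points as the paths are chained).\<close>
lemma cat_eq:
  assumes N: "N > 0" and i: "i < N" and t: "real i \<le> real N * t" "real N * t \<le> real i + 1"
    and ch: "\<And>j. Suc j < N \<Longrightarrow> p j 1 = p (Suc j) 0"
  shows "cat N p t = p i (real N * t - real i)"
proof (cases "real N * t < real i + 1")
  case True
  then have "\<lfloor>real N * t\<rfloor> = int i" using t by (simp add: floor_eq_iff)
  then have "min (N-1) (nat \<lfloor>real N * t\<rfloor>) = i" using i by simp
  then show ?thesis unfolding cat_def by simp
next
  case False
  then have e: "real N * t = real i + 1" using t by simp
  then have fl: "\<lfloor>real N * t\<rfloor> = int i + 1" by simp
  show ?thesis
  proof (cases "Suc i < N")
    case True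
    then have "min (N-1) (nat \<lfloor>real N * t\<rfloor>) = Suc i" using fl by simp
    then show ?thesis unfolding cat_def using e ch[OF True] by simp
  next
    case False
    then have "min (N-1) (nat \<lfloor>real N * t\<rfloor>) = i" using fl i by simp
    then show ?thesis unfolding cat_def by simp
  qed
qed

lemma cat_0: "N > 0 \<Longrightarrow> cat N p 0 = p 0 0"
  unfolding cat_def by simp

lemma cat_1: "N > 0 \<Longrightarrow> cat N p 1 = p (N-1) 1"
  unfolding cat_def by (simp add: of_nat_diff)

lemma cat_cong: "N > 0 \<Longrightarrow> (\<And>i. i < N \<Longrightarrow> p i = q i) \<Longrightarrow> cat N p = cat N q"
  unfolding cat_def by (intro ext) simp

lemma cat_index:
  assumes "N > 0" "t \<in> {0..1}"
  shows "\<exists>i<N. real i \<le> real N * t \<and> real N * t \<le> real i + 1"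
proof -
  have "0 \<le> real N * t" using assms by auto
  have "real N * t \<le> real N" using assms by (simp add: mult_left_le)
  show ?thesis
  proof (cases "nat \<lfloor>real N * t\<rfloor> \<le> N - 1")
    case True
    moreover have "real (nat \<lfloor>real N * t\<rfloor>) \<le> real N * t" "real N * t \<le> real (nat \<lfloor>real N * t\<rfloor>) + 1"
      using \<open>0 \<le> real N * t\<close> by linarith+
    ultimately show ?thesis using assms(1) by (metis Suc_pred' less_Suc_eq_le)
  next
    case False
    then have "int N \<le> \<lfloor>real N * t\<rfloor>" using assms(1) by linarith
    then have "real N \<le> real N * t" by (simp add: le_floor_iff)
    then have "real N * t = real N" using \<open>real N * t \<le> real N\<close> by simp
    then show ?thesis using assms(1) by (intro exI[of _ "N-1"]) (simp add: of_nat_diff)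
  qed
qed

lemma continuous_map_rescale_piece:
  fixes Y :: "'x topology" and N i :: nat
  defines "S \<equiv> topspace Y \<times> {t\<in>{0..1::real}. real i \<le> real N * t \<and> real N * t \<le> real i + 1}"
  shows "continuous_map (subtopology (prod_topology Y (top_of_set {0..1})) S)
           (prod_topology Y (top_of_set {0..1})) (\<lambda>z. (fst z, real N * snd z - real i))"
  unfolding continuous_map_paired
proof
  let ?X = "prod_topology Y (top_of_set {0..1::real})"
  show "continuous_map (subtopology ?X S) Y fst"
    by (rule continuous_map_from_subtopology[OF continuous_map_fst])
  have "continuous_map (subtopology ?X S) euclideanreal (\<lambda>z. real N * snd z - real i)"
    by (intro continuous_map_diff continuous_map_real_mult_left continuous_map_const[THEN iffD2]
        continuous_map_into_fulltopology[OF continuous_map_from_subtopology[OF continuous_map_snd]]) simp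
  then show "continuous_map (subtopology ?X S) (top_of_set {0..1}) (\<lambda>z. real N * snd z - real i)"
    unfolding continuous_map_in_subtopology by (auto simp: S_def topspace_subtopology)
qed

text \<open>Concatenation of a chained family of continuous families of paths
  (parametrized by a space Y) is continuous, by the pasting lemma for the finitely
  many closed pieces Y \<times> [i/N, (i+1)/N].\<close>
lemma continuous_map_cat:
  assumes N: "N > 0"
    and k: "\<And>i. i < N \<Longrightarrow> continuous_map (prod_topology Y (top_of_set {0..1})) T (\<lambda>z. k i (fst z) (snd z))"
    and ch: "\<And>i a. Suc i < N \<Longrightarrow> a \<in> topspace Y \<Longrightarrow> k i a 1 = k (Suc i) a 0"
  shows "continuous_map (prod_topology Y (top_of_set {0..1})) T (\<lambda>z. cat N (\<lambda>i. k i (fst z)) (snd z))"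
proof -
  let ?X = "prod_topology Y (top_of_set {0..1::real})"
  define A where "A i = {t\<in>{0..1::real}. real i \<le> real N * t \<and> real N * t \<le> real i + 1}" for i
  define S where "S i = topspace Y \<times> A i" for i
  define f where "f i = (\<lambda>z. k i (fst z) (snd z)) \<circ> (\<lambda>z. (fst z, real N * snd z - real i))" for i
  have cat_piece: "cat N (\<lambda>i. k i (fst z)) (snd z) = f i z" if "i < N" "z \<in> topspace ?X \<inter> S i" for i z
  proof -
    obtain a t where z: "z = (a,t)" by fastforce
    have a: "a \<in> topspace Y" and t: "t \<in> A i" using that unfolding z S_def by auto
    show ?thesis unfolding f_def z using t that(1)
      by (simp add: A_def) (rule cat_eq[OF N], auto intro: ch[OF _ a])
  qed
  show ?thesis
  proof (rule pasting_lemma_closed[of "{..<N}" ?X S T f])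
    fix i assume "i \<in> {..<N}"
    have "closed {t::real. real i \<le> real N * t \<and> real N * t \<le> real i + 1}"
      by (intro closed_Collect_conj closed_Collect_le continuous_intros)
    then have "closedin (top_of_set {0..1}) ({0..1} \<inter> {t::real. real i \<le> real N * t \<and> real N * t \<le> real i + 1})"
      by (rule closedin_closed_Int)
    moreover have "{0..1} \<inter> {t::real. real i \<le> real N * t \<and> real N * t \<le> real i + 1} = A i"
      unfolding A_def by auto
    ultimately show "closedin ?X (S i)" unfolding S_def
      by (simp add: closedin_prod_Times_iff)
  next
    fix i assume i: "i \<in> {..<N}"
    have "continuous_map (subtopology ?X (S i)) ?X (\<lambda>z. (fst z, real N * snd z - real i))"
      using continuous_map_rescale_piece[where Y = Y and N = N and i = i] unfolding S_def A_def by simp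
    then show "continuous_map (subtopology ?X (S i)) T (f i)"
      unfolding f_def using k i by (auto intro: continuous_map_compose)
  next
    fix i j z assume "i \<in> {..<N}" "j \<in> {..<N}" "z \<in> topspace ?X \<inter> S i \<inter> S j"
    then show "f i z = f j z" using cat_piece[of i z] cat_piece[of j z] by auto
  next
    fix z assume z: "z \<in> topspace ?X"
    then have "snd z \<in> {0..1}" by auto
    then obtain i where i: "i < N" "real i \<le> real N * snd z" "real N * snd z \<le> real i + 1"
      using cat_index[OF N] by blast
    then have "z \<in> S i" using z unfolding S_def A_def by (cases z) auto
    then show "\<exists>j. j \<in> {..<N} \<and> z \<in> S j \<and> cat N (\<lambda>i. k i (fst z)) (snd z) = f j z"
      using cat_piece[of i z] i z by auto
  qed simp
qed

lemma pathin_cat: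
  assumes N: "N > 0" and p: "\<And>i. i < N \<Longrightarrow> pathin T (p i)"
    and ch: "\<And>i. Suc i < N \<Longrightarrow> p i 1 = p (Suc i) 0"
  shows "pathin T (cat N p)"
proof -
  have "continuous_map (prod_topology (top_of_set {0..1::real}) (top_of_set {0..1})) T
          (\<lambda>z. cat N (\<lambda>i. (\<lambda>a t. p i t) (fst z)) (snd z))"
  proof (rule continuous_map_cat[OF N])
    fix i assume "i < N"
    then have "continuous_map (prod_topology (top_of_set {0..1::real}) (top_of_set {0..1})) T (p i \<circ> snd)"
      by (intro continuous_map_compose[OF continuous_map_snd]) (use p in \<open>simp add: pathin_def\<close>)
    then show "continuous_map (prod_topology (top_of_set {0..1::real}) (top_of_set {0..1})) T (\<lambda>z. p i (snd z))"
      by (simp add: o_def)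
  qed (rule ch)
  moreover have "continuous_map (top_of_set {0..1::real})
      (prod_topology (top_of_set {0..1::real}) (top_of_set {0..1})) (\<lambda>t. (0::real, t))"
    unfolding continuous_map_paired by (simp add: continuous_map_id[unfolded id_def])
  ultimately have "continuous_map (top_of_set {0..1::real}) T
      ((\<lambda>z. cat N (\<lambda>i. (\<lambda>a t. p i t) (fst z)) (snd z)) \<circ> (\<lambda>t. (0::real, t)))"
    by (rule continuous_map_compose[rotated])
  then show ?thesis unfolding pathin_def by (simp add: o_def)
qed

text \<open>Concatenation respects homotopy rel. end-points: concatenate the homotopies.\<close>
lemma homotopic_rel_ends_cat:
  assumes N: "N > 0" and pq: "\<And>i. i < N \<Longrightarrow> homotopic_rel_ends T (p i) (q i)"
    and ch: "\<And>i. Suc i < N \<Longrightarrow> p i 1 = p (Suc i) 0"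
  shows "homotopic_rel_ends T (cat N p) (cat N q)"
proof -
  let ?I = "top_of_set {0..1::real}"
  define Q where "Q i h \<longleftrightarrow> continuous_map (prod_topology ?I ?I) T h \<and>
       (\<forall>x. h(0, x) = p i x) \<and> (\<forall>x. h(1, x) = q i x) \<and>
       (\<forall>t \<in> {0..1}. h (t, 0) = p i 0 \<and> h (t, 1) = p i 1)" for i h
  have "\<forall>i\<in>{..<N}. \<exists>h. Q i h"
    using pq unfolding homotopic_rel_ends_def homotopic_with_def Q_def by simp
  then obtain h where "\<forall>i\<in>{..<N}. Q i (h i)" by (metis bchoice)
  then have h: "\<And>i. i < N \<Longrightarrow> continuous_map (prod_topology ?I ?I) T (h i) \<and>
       (\<forall>x. h i (0, x) = p i x) \<and> (\<forall>x. h i (1, x) = q i x) \<and>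
       (\<forall>t \<in> {0..1}. h i (t, 0) = p i 0 \<and> h i (t, 1) = p i 1)"
    unfolding Q_def by blast
  let ?H = "\<lambda>z. cat N (\<lambda>i. (\<lambda>a t. h i (a, t)) (fst z)) (snd z)"
  have "continuous_map (prod_topology ?I ?I) T ?H"
  proof (rule continuous_map_cat[OF N])
    fix i a assume "Suc i < N" "a \<in> topspace ?I"
    then show "h i (a, 1) = h (Suc i) (a, 0)" using h[of i] h[of "Suc i"] ch[of i] by auto
  qed (use h in simp)
  moreover have "?H (0, x) = cat N p x" for x
    by (simp add: cat_cong[OF N, of "\<lambda>i t. h i (0, t)" p] h)
  moreover have "?H (1, x) = cat N q x" for x
    by (simp add: cat_cong[OF N, of "\<lambda>i t. h i (1, t)" q] h)
  moreover have "?H (s, 0) = cat N p 0 \<and> ?H (s, 1) = cat N p 1" if "s \<in> {0..1}" for s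
    using h[of 0] h[of "N-1"] N that by (simp add: cat_0 cat_1)
  ultimately show ?thesis unfolding homotopic_rel_ends_def homotopic_with_def
    by (intro exI[of _ ?H]) auto
qed

section \<open>Edge paths and simplicial approximation\<close>

lemma edge_path_0: "edge_path a b 0 = vertex a"
  unfolding edge_path_def by simp

lemma edge_path_1: "edge_path a b 1 = vertex b"
  unfolding edge_path_def by simp

lemma vertex_positive: "vertex a v > 0 \<Longrightarrow> v = a"
  unfolding vertex_def by (auto split: if_splits)

lemma edge_path_in:
  assumes "finite G" "a \<in> G" "b \<in> G" "u \<in> {0..1}"
  shows "edge_path a b u \<in> closed_simplex G" "supp (edge_path a b u) \<subseteq> {a, b}"
proof -
  show "supp (edge_path a b u) \<subseteq> {a, b}"
    unfolding supp_def edge_path_def vertex_def by auto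
  moreover have "sum (edge_path a b u) G = 1"
    using assms unfolding edge_path_def vertex_def
    by (simp add: sum.distrib sum_distrib_left[symmetric] sum.delta)
  moreover have "0 \<le> edge_path a b u z" for z
    using assms(4) unfolding edge_path_def vertex_def by auto
  ultimately show "edge_path a b u \<in> closed_simplex G"
    unfolding closed_simplex_def using assms by auto
qed

lemma pathin_edge_path:
  assumes "rips_simplex E {a, b}"
  shows "pathin (rips E) (edge_path a b)"
  unfolding pathin_def
proof (rule continuous_map_into_rips[of _ _ "{a,b}"])
  show "continuous_map (top_of_set {0..1}) euclidean (edge_path a b)"
    unfolding continuous_map_euclidean_fun_iff edge_path_def
    by (intro allI continuous_map_add continuous_map_real_mult continuous_map_diff continuous_map_const[THEN iffD2]
        continuous_map_into_fulltopology[OF continuous_map_id_subt[unfolded id_def]]) auto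
  fix y assume "y \<in> topspace (top_of_set {0..1::real})"
  then show "edge_path a b y \<in> rips_space E \<and> supp (edge_path a b y) \<subseteq> {a, b}"
    using edge_path_in[of "{a,b}" a b y] closed_simplex_in_rips_space[OF assms] by auto
qed simp

definition edge_chain :: "nat \<Rightarrow> (nat \<Rightarrow> 'a) \<Rightarrow> real \<Rightarrow> ('a \<Rightarrow> real)" where
  "edge_chain N w = cat N (\<lambda>i. edge_path (w i) (w (Suc i)))"

lemma edge_chain_eq:
  assumes "N > 0" "i < N" "real i \<le> real N * t" "real N * t \<le> real i + 1"
  shows "edge_chain N w t = edge_path (w i) (w (Suc i)) (real N * t - real i)"
  unfolding edge_chain_def by (rule cat_eq[OF assms]) (simp add: edge_path_0 edge_path_1)

lemma edge_chain_ends: "N > 0 \<Longrightarrow> edge_chain N w 0 = vertex (w 0) \<and> edge_chain N w 1 = vertex (w N)"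
  unfolding edge_chain_def by (simp add: cat_0 cat_1 edge_path_0 edge_path_1)

lemma pathin_edge_chain:
  assumes "N > 0" "\<And>i. i < N \<Longrightarrow> rips_simplex E {w i, w (Suc i)}"
  shows "pathin (rips E) (edge_chain N w)"
  unfolding edge_chain_def
proof (rule pathin_cat[OF assms(1)])
  fix i assume "i < N"
  then show "pathin (rips E) (edge_path (w i) (w (Suc i)))" by (rule pathin_edge_path[OF assms(2)])
qed (simp add: edge_path_0 edge_path_1)

lemma closed_simplex_convex:
  assumes "f \<in> closed_simplex S" "g \<in> closed_simplex S" "s \<in> {0..1}"
  shows "(\<lambda>v. (1 - s) * f v + s * g v) \<in> closed_simplex S"
proof -
  have f: "\<forall>z. 0 \<le> f z" "supp f \<subseteq> S" "sum f S = 1" and g: "\<forall>z. 0 \<le> g z" "supp g \<subseteq> S" "sum g S = 1"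
    using assms unfolding closed_simplex_def by auto
  have "sum (\<lambda>v. (1 - s) * f v + s * g v) S = (1 - s) * sum f S + s * sum g S"
    by (simp add: sum.distrib sum_distrib_left)
  moreover have "supp (\<lambda>v. (1 - s) * f v + s * g v) \<subseteq> S"
  proof
    fix z assume "z \<in> supp (\<lambda>v. (1 - s) * f v + s * g v)"
    then have "f z \<noteq> 0 \<or> g z \<noteq> 0" unfolding supp_def by auto
    then show "z \<in> S" using f(2) g(2) unfolding supp_def by blast
  qed
  ultimately show ?thesis using f g assms(3) unfolding closed_simplex_def by auto
qed

text \<open>Straight-line homotopy: if d t always lies in the carrier simplex of c t,
  the segment from c t to d t stays in that simplex, and (the vertices of c being
  finitely many) the resulting homotopy is continuous into R(X,F).\<close>
lemma straight_line_homotopy: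
  assumes c: "pathin (rips F) c" and d: "pathin (rips F) d"
    and ends: "d 0 = c 0" "d 1 = c 1"
    and dc: "\<And>t. t \<in> {0..1} \<Longrightarrow> d t \<in> closed_simplex (supp (c t))"
  shows "homotopic_rel_ends (rips F) c d"
proof -
  let ?I = "top_of_set {0..1::real}"
  define V where "V = (\<Union>t\<in>{0..1}. supp (c t))"
  have c_in: "c t \<in> rips_space F" if "t \<in> {0..1}" for t
    using continuous_map_image_subset_topspace[OF c[unfolded pathin_def]] that by (auto simp: topspace_rips)
  have coord: "continuous_map (prod_topology ?I ?I) euclideanreal (\<lambda>z. p (snd z) v)"
    if "pathin (rips F) p" for p :: "real \<Rightarrow> 'a \<Rightarrow> real" and v
  proof -
    have "continuous_map ?I euclidean p"
      using continuous_map_compose[OF that[unfolded pathin_def] continuous_map_rips_euclidean] by (simp add: o_def)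
    then have "continuous_map ?I euclideanreal (\<lambda>t. p t v)" unfolding continuous_map_euclidean_fun_iff by blast
    from continuous_map_compose[OF continuous_map_snd this] show ?thesis by (simp only: comp_def)
  qed
  define H where "H z = (\<lambda>v. (1 - fst z) * c (snd z) v + fst z * d (snd z) v)" for z :: "real \<times> real"
  have "continuous_map (prod_topology ?I ?I) (rips F) H"
  proof (rule continuous_map_into_rips[OF _ pathin_rips_finite_vertices[OF c]])
    have "continuous_map (prod_topology ?I ?I) euclideanreal fst"
      by (rule continuous_map_into_fulltopology[OF continuous_map_fst])
    then show "continuous_map (prod_topology ?I ?I) euclidean H"
      unfolding continuous_map_euclidean_fun_iff H_def
      by (intro allI continuous_map_add continuous_map_real_mult continuous_map_diff
          continuous_map_const[THEN iffD2] coord c d) simp_all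
  next
    fix z assume "z \<in> topspace (prod_topology ?I ?I)"
    then obtain s t where z: "z = (s, t)" "s \<in> {0..1}" "t \<in> {0..1}" by auto
    have "H z \<in> closed_simplex (supp (c t))"
      unfolding H_def z using closed_simplex_convex[OF rips_space_supp(2)[OF c_in] dc] z by simp
    then show "H z \<in> rips_space F \<and> supp (H z) \<subseteq> (\<Union>t\<in>{0..1}. supp (c t))"
      using closed_simplex_in_rips_space[OF rips_space_supp(1)[OF c_in[OF z(3)]]] z
      unfolding closed_simplex_def by auto
  qed
  then show ?thesis
    unfolding homotopic_rel_ends_def homotopic_with_def
    by (intro exI[of _ H]) (use ends in \<open>auto simp: H_def algebra_simps\<close>)
qed

text \<open>Lebesgue number argument: an open cover of [0,1] admits a subdivision into
  N pieces such that any two adjacent pieces lie in a common member of the cover.\<close>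
lemma Lebesgue_subdivision:
  fixes W :: "'v \<Rightarrow> real set"
  assumes W: "\<And>v. open (W v)" and cover: "{0..1} \<subseteq> \<Union>(range W)"
  obtains N :: nat and w where "N > 0"
    "\<And>i. {t\<in>{0..1}. real i - 1 \<le> real N * t \<and> real N * t \<le> real i + 1} \<subseteq> W (w i)"
proof -
  obtain \<delta> where \<delta>: "0 < \<delta>" "\<And>T. T \<subseteq> {0..1} \<Longrightarrow> diameter T < \<delta> \<Longrightarrow> \<exists>B\<in>range W. T \<subseteq> B"
    using Lebesgue_number_lemma[OF compact_Icc _ cover] W by blast
  obtain N :: nat where N: "2 / \<delta> < real N" using reals_Archimedean2 by blast
  have "0 < 2 / \<delta>" using \<delta>(1) by simp
  then have "0 < real N" using N by linarith
  then have Npos: "N > 0" by simp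
  have dN: "2 / real N < \<delta>" using N \<delta>(1) Npos by (simp add: field_simps)
  define T where "T i = {t\<in>{0..1::real}. real i - 1 \<le> real N * t \<and> real N * t \<le> real i + 1}" for i :: nat
  have "\<exists>v. T i \<subseteq> W v" for i
  proof -
    let ?J = "{(real i - 1) / real N .. (real i + 1) / real N}"
    have sub: "T i \<subseteq> ?J"
      unfolding T_def using Npos by (auto simp: field_simps)
    have "diameter (T i) \<le> diameter ?J"
      by (rule diameter_subset[OF sub]) simp
    also have "\<dots> = 2 / real N"
    proof -
      have "(real i - 1) / real N \<le> (real i + 1) / real N" using Npos by (simp add: divide_right_mono)
      moreover have "(real i + 1) / real N - (real i - 1) / real N = 2 / real N"
        by (simp add: diff_divide_distrib[symmetric])
      ultimately show ?thesis by (simp add: not_less)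
    qed
    finally have "diameter (T i) < \<delta>" using dN by simp
    moreover have "T i \<subseteq> {0..1}" unfolding T_def by auto
    ultimately show ?thesis using \<delta>(2) by blast
  qed
  then obtain w where "\<And>i. T i \<subseteq> W (w i)" by metis
  then show ?thesis using that[OF Npos] unfolding T_def by blast
qed

lemma vertex_chain_along_path:
  assumes c: "pathin (rips F) c"
  obtains N w where "N > 0" "c 0 (w 0) > 0" "c 1 (w N) > 0"
    "\<And>t i. t \<in> {0..1} \<Longrightarrow> real i \<le> real N * t \<Longrightarrow> real N * t \<le> real i + 1 \<Longrightarrow>
       {w i, w (Suc i)} \<subseteq> supp (c t)"
proof -
  have "continuous_map (top_of_set {0..1}) euclidean c"
    using continuous_map_compose[OF c[unfolded pathin_def] continuous_map_rips_euclidean] by (simp add: o_def)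
  then have "continuous_on {0..1} (\<lambda>t. c t v)" for v
    unfolding continuous_map_euclidean_fun_iff by (simp add: continuous_map_iff_continuous)
  then have "\<exists>A. open A \<and> A \<inter> {0..1} = (\<lambda>t. c t v) -` {0<..} \<inter> {0..1}" for v
    unfolding continuous_on_open_invariant by (meson open_greaterThan)
  then obtain W where W: "\<And>v. open (W v)" "\<And>v. W v \<inter> {0..1} = (\<lambda>t. c t v) -` {0<..} \<inter> {0..1}"
    by metis
  have cover: "{0..1} \<subseteq> \<Union>(range W)"
  proof
    fix t :: real assume t: "t \<in> {0..1}"
    then have "c t \<in> rips_space F"
      using continuous_map_image_subset_topspace[OF c[unfolded pathin_def]] by (auto simp: topspace_rips)
    then obtain v where "c t v > 0" by (rule rips_space_positive_vertex)
    then have "t \<in> W v \<inter> {0..1}" unfolding W(2) using t by simp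
    then have "t \<in> W v" by simp
    then show "t \<in> \<Union>(range W)" by blast
  qed
  then obtain N w where N: "N > 0"
    and sub: "\<And>i. {t\<in>{0..1}. real i - 1 \<le> real N * t \<and> real N * t \<le> real i + 1} \<subseteq> W (w i)"
    using Lebesgue_subdivision[OF W(1) cover] by metis
  have pos: "c t (w i) > 0" if "t \<in> {0..1}" "real i - 1 \<le> real N * t" "real N * t \<le> real i + 1" for t i
  proof -
    have "t \<in> W (w i) \<inter> {0..1}" using sub[of i] that by blast
    then show ?thesis unfolding W(2) by simp
  qed
  show ?thesis
  proof (rule that[OF N])
    show "c 0 (w 0) > 0" by (rule pos) simp_all
    show "c 1 (w N) > 0" by (rule pos) simp_all
  next
    fix t i assume "t \<in> {0..1}" "real i \<le> real N * t" "real N * t \<le> real i + 1"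
    then show "{w i, w (Suc i)} \<subseteq> supp (c t)"
      using pos[of t i] pos[of t "Suc i"] unfolding supp_def by auto
  qed
qed

lemma edge_loop_approximation:
  assumes c: "pathin (rips F) c" and c0: "c 0 = vertex x" and c1: "c 1 = vertex x"
  obtains N w where "N > 0" "w 0 = x" "w N = x" "\<And>i. i < N \<Longrightarrow> rips_simplex F {w i, w (Suc i)}"
    "homotopic_rel_ends (rips F) c (edge_chain N w)"
proof -
  obtain N w where N: "N > 0" and w0: "c 0 (w 0) > 0" and wN: "c 1 (w N) > 0"
    and both: "\<And>t i. t \<in> {0..1} \<Longrightarrow> real i \<le> real N * t \<Longrightarrow> real N * t \<le> real i + 1 \<Longrightarrow>
       {w i, w (Suc i)} \<subseteq> supp (c t)"
    using vertex_chain_along_path[OF c] by metis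
  have c_in: "c t \<in> rips_space F" if "t \<in> {0..1}" for t
    using continuous_map_image_subset_topspace[OF c[unfolded pathin_def]] that by (auto simp: topspace_rips)
  have simplex: "rips_simplex F {w i, w (Suc i)}" if "i < N" for i
  proof -
    let ?t = "real i / real N"
    have t: "?t \<in> {0..1}" "real i \<le> real N * ?t" "real N * ?t \<le> real i + 1"
      using that N by auto
    show ?thesis using rips_simplex_subset[OF rips_space_supp(1)[OF c_in[OF t(1)]] both[OF t]] by simp
  qed
  have ends: "w 0 = x" "w N = x"
    using w0 wN c0 c1 vertex_positive by auto
  have carrier: "edge_chain N w t \<in> closed_simplex (supp (c t))" if t: "t \<in> {0..1}" for t
  proof -
    obtain i where i: "i < N" "real i \<le> real N * t" "real N * t \<le> real i + 1"
      using cat_index[OF N t] by blast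
    have "finite (supp (c t))"
      using rips_space_supp(1)[OF c_in[OF t]] unfolding rips_simplex_def by auto
    then show ?thesis
      unfolding edge_chain_eq[OF N i]
      using edge_path_in(1)[of "supp (c t)" "w i" "w (Suc i)" "real N * t - real i"] both[OF t i(2,3)] i
      by auto
  qed
  have "edge_chain N w 0 = c 0" "edge_chain N w 1 = c 1"
    using edge_chain_ends[OF N, of w] ends c0 c1 by auto
  moreover have "pathin (rips F) (edge_chain N w)"
    using N simplex by (rule pathin_edge_chain)
  ultimately have "homotopic_rel_ends (rips F) c (edge_chain N w)"
    using straight_line_homotopy[OF c _ _ _ carrier] by blast
  then show ?thesis using that N ends simplex by blast
qed

section \<open>Concatenation of generalized paths\<close>

lemma pi1_thread_iff_generalized_path: "pi1_thread x g \<longleftrightarrow> generalized_path x x g"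
  unfolding pi1_thread_def generalized_path_def loop_at_def by simp

lemma generalized_path_ends:
  assumes "generalized_path a b \<gamma>" "entourage E"
  shows "pathin (rips E) (\<gamma> E)" "\<gamma> E 0 = vertex a" "\<gamma> E 1 = vertex b"
  using assms unfolding generalized_path_def path_from_to_def by auto

lemma generalized_path_cat:
  assumes N: "N > 0" and \<Gamma>: "\<And>i. i < N \<Longrightarrow> generalized_path (w i) (w (Suc i)) (\<Gamma> i)"
  shows "generalized_path (w 0) (w N) (\<lambda>E. cat N (\<lambda>i. \<Gamma> i E))"
  unfolding generalized_path_def path_from_to_def
proof (intro conjI allI impI)
  fix E :: "('a \<times> 'a) set" assume E: "entourage E"
  note ends = generalized_path_ends[OF \<Gamma> E]
  have chain: "\<Gamma> i E 1 = \<Gamma> (Suc i) E 0" if "Suc i < N" for i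
    using ends[of i] ends[of "Suc i"] that by simp
  show "pathin (rips E) (cat N (\<lambda>i. \<Gamma> i E))"
    by (rule pathin_cat[where p = "\<lambda>i. \<Gamma> i E", OF N ends(1) chain])
  show "cat N (\<lambda>i. \<Gamma> i E) 0 = vertex (w 0)" using ends[OF N] by (simp add: cat_0 N)
  show "cat N (\<lambda>i. \<Gamma> i E) 1 = vertex (w N)" using ends[of "N - 1"] N by (simp add: cat_1)
  fix F :: "('a \<times> 'a) set" assume F: "entourage F" "F \<subseteq> E"
  show "homotopic_rel_ends (rips E) (cat N (\<lambda>i. \<Gamma> i F)) (cat N (\<lambda>i. \<Gamma> i E))"
  proof (rule homotopic_rel_ends_cat[OF N])
    fix i assume "i < N"
    then show "homotopic_rel_ends (rips E) (\<Gamma> i F) (\<Gamma> i E)"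
      using \<Gamma>[of i] F E unfolding generalized_path_def by blast
  next
    fix i assume "Suc i < N"
    then show "\<Gamma> i F 1 = \<Gamma> (Suc i) F 0"
      using generalized_path_ends[OF \<Gamma> F(1), of i] generalized_path_ends[OF \<Gamma> F(1), of "Suc i"] by simp
  qed
qed

lemma short_gpath_cat:
  assumes N: "N > 0" and E: "entourage E"
    and \<Gamma>: "\<And>i. i < N \<Longrightarrow> generalized_path (w i) (w (Suc i)) (\<Gamma> i) \<and> short_gpath E (w i) (w (Suc i)) (\<Gamma> i)"
  shows "homotopic_rel_ends (rips E) (cat N (\<lambda>i. \<Gamma> i E)) (edge_chain N w)"
  unfolding edge_chain_def
proof (rule homotopic_rel_ends_cat[OF N])
  fix i assume "Suc i < N"
  then show "\<Gamma> i E 1 = \<Gamma> (Suc i) E 0"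
    using generalized_path_ends[OF conjunct1[OF \<Gamma>] E, of i] generalized_path_ends[OF conjunct1[OF \<Gamma>] E, of "Suc i"]
    by simp
qed (use \<Gamma> in \<open>simp add: short_gpath_def\<close>)

lemma edge_loop_lifts_to_thread:
  assumes E: "entourage E"
    and join: "\<And>a b. (a, b) \<in> J \<Longrightarrow> \<exists>\<gamma>. generalized_path a b \<gamma> \<and> short_gpath E a b \<gamma>"
    and N: "N > 0" "w 0 = x" "w N = x" and edges: "\<And>i. i < N \<Longrightarrow> (w i, w (Suc i)) \<in> J"
  obtains g where "pi1_thread x g" "homotopic_rel_ends (rips E) (g E) (edge_chain N w)"
proof -
  have "\<forall>i\<in>{..<N}. \<exists>\<gamma>. generalized_path (w i) (w (Suc i)) \<gamma> \<and> short_gpath E (w i) (w (Suc i)) \<gamma>"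
    using join edges by simp
  from bchoice[OF this] obtain \<Gamma>
    where "\<forall>i\<in>{..<N}. generalized_path (w i) (w (Suc i)) (\<Gamma> i) \<and> short_gpath E (w i) (w (Suc i)) (\<Gamma> i)"
    by blast
  then have \<Gamma>: "\<And>i. i < N \<Longrightarrow> generalized_path (w i) (w (Suc i)) (\<Gamma> i) \<and> short_gpath E (w i) (w (Suc i)) (\<Gamma> i)"
    by simp
  have "generalized_path (w 0) (w N) (\<lambda>E'. cat N (\<lambda>i. \<Gamma> i E'))"
    using N(1) conjunct1[OF \<Gamma>] by (rule generalized_path_cat)
  then have "pi1_thread x (\<lambda>E'. cat N (\<lambda>i. \<Gamma> i E'))"
    using N by (simp add: pi1_thread_iff_generalized_path)
  moreover have "homotopic_rel_ends (rips E) (cat N (\<lambda>i. \<Gamma> i E)) (edge_chain N w)"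
    using N(1) E \<Gamma> by (rule short_gpath_cat)
  ultimately show ?thesis using that by blast
qed

theorem mainTheorem8:
  fixes x :: "'a::uniform_space"
  assumes "uniformly_joinable TYPE('a)"
  shows "strong_ML_pi1 x"
  unfolding strong_ML_pi1_def
proof (intro allI impI)
  fix E :: "('a \<times> 'a) set" assume E: "entourage E"
  obtain J where J: "entourage J"
    and join: "\<And>a b. (a, b) \<in> J \<Longrightarrow> \<exists>\<gamma>. generalized_path a b \<gamma> \<and> short_gpath E a b \<gamma>"
    using assms E unfolding uniformly_joinable_def by blast
  have F: "entourage (J \<inter> E)" using J E unfolding entourage_def by (simp add: eventually_conj)
  have "\<exists>g. pi1_thread x g \<and> homotopic_rel_ends (rips E) (g E) c" if "loop_at (J \<inter> E) x c" for c
  proof -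
    have c: "pathin (rips (J \<inter> E)) c" "c 0 = vertex x" "c 1 = vertex x"
      using that unfolding loop_at_def path_from_to_def by auto
    obtain N w where N: "N > 0" "w 0 = x" "w N = x"
      and simplex: "\<And>i. i < N \<Longrightarrow> rips_simplex (J \<inter> E) {w i, w (Suc i)}"
      and approx: "homotopic_rel_ends (rips (J \<inter> E)) c (edge_chain N w)"
      using edge_loop_approximation[OF c] by metis
    have "(w i, w (Suc i)) \<in> J" if "i < N" for i
      using simplex[OF that] unfolding rips_simplex_def by auto
    then obtain g where g: "pi1_thread x g" "homotopic_rel_ends (rips E) (g E) (edge_chain N w)"
      using edge_loop_lifts_to_thread[OF E join N] by metis
    have "homotopic_rel_ends (rips E) c (edge_chain N w)"
      by (rule homotopic_rel_ends_rips_mono[OF _ approx]) blast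
    then show ?thesis
      using g by (blast intro: homotopic_rel_ends_trans homotopic_rel_ends_sym)
  qed
  then show "\<exists>F. entourage F \<and> F \<subseteq> E \<and>
      (\<forall>c. loop_at F x c \<longrightarrow> (\<exists>g. pi1_thread x g \<and> homotopic_rel_ends (rips E) (g E) c))"
    using F by blast
qed

end
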